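(* Let $N\geq1$ and $\rho\in\{0,1/2,1,3/2,\ldots\}\cup[(N-1)/2,\infty)$. Then for every $n\geq1$ and every $A_{1},\ldots,A_{n}$ in the set of $N\times N$ real symmetric positive definite matrices, \[ \sum_{i=1}^{n}\det(A_{i})^{-\rho}-\sum_{1\leq i<j\leq n}\det(A_{i}+A_{j})^{-\rho}+\cdots+(-1)^{n-1}\det\Bigl(\sum_{i=1}^{n}A_{i}\Bigr)^{-\rho}\geq0, \] where the general term is $(-1)^{k-1}\sum_{1\le i_1<\cdots<i_k\le n}\det(A_{i_1}+\cdots+A_{i_k})^{-\rho}$. *)

theory Defs
  imports "HOL-Analysis.Analysis"
begin

definition sym_pos_def_mat :: "real^'n^'n \<Rightarrow> bool" where
  "sym_pos_def_mat A \<longleftrightarrow> transpose A = A \<and> (\<forall>x::real^'n. x \<noteq> 0 \<longrightarrow> x \<bullet> (A *v x) > 0)"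

end

theory Submission
  imports Defs "HOL-Probability.Distributions"
begin

(*
  Write f X = det X powr (- rho). Grouping the subsets by their largest element turns the
  alternating sum into a sum of iterated differences (-1)^m Delta_{A_1} ... Delta_{A_m} f (A_(m+1)),
  so it suffices that f is completely monotone on the positive definite cone: all such differences
  with positive semidefinite increments are nonnegative.

  This is proved for all principal minors, by induction on the index set J. For r > 0 put
  g = 2 r - 1 > -1; integrating out one Gaussian variable at a time (each step is a Schur complement)
  gives
    int |z_k|^g exp (- z^T X z) dz = c * det_J X powr (r - 1/2) * det_(J + k) X powr (- r),
  hence det_(J + k) X powr (- r) = c^-1 * det_J X powr (- (r - 1/2)) * (Gaussian integral).
  The Gaussian integral is completely monotone because each X |-> exp (- z^T X z) is, products of
  completely monotone functions are completely monotone, and r - 1/2 lies in the Gindikin set of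
  dimension N - 1 whenever r > 0 lies in that of dimension N.
*)

section \<open>Iterated differences and complete monotonicity\<close>

text \<open>\<open>iter_diff f X A m\<close> is \<open>(-1)\<^sup>m \<Delta>\<^sub>A\<^sub>1 \<dots> \<Delta>\<^sub>A\<^sub>m f X\<close> for the forward difference
  \<open>\<Delta>\<^sub>a f = f (\<cdot> + a) - f\<close>; the increments are indexed from \<open>1\<close>.\<close>
definition iter_diff :: "('a::comm_monoid_add \<Rightarrow> real) \<Rightarrow> 'a \<Rightarrow> (nat \<Rightarrow> 'a) \<Rightarrow> nat \<Rightarrow> real" where
  "iter_diff f X A m = (\<Sum>S\<in>Pow {1..m}. (-1) ^ card S * f (X + (\<Sum>i\<in>S. A i)))"

lemma iter_diff_0 [simp]: "iter_diff f X A 0 = f X"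
  by (simp add: iter_diff_def)

lemma sum_Pow_insert:
  assumes "finite S" "x \<notin> S"
  shows "(\<Sum>T\<in>Pow (insert x S). g T) = (\<Sum>T\<in>Pow S. g T) + (\<Sum>T\<in>Pow S. g (insert x T))"
proof -
  have "inj_on (insert x) (Pow S)"
    using assms(2) by (intro inj_onI) (metis PowD insert_ident subsetD)
  moreover have "Pow S \<inter> insert x ` Pow S = {}"
    using assms(2) by auto
  ultimately show ?thesis
    using assms(1) by (simp add: Pow_insert sum.union_disjoint sum.reindex)
qed

lemma iter_diff_Suc:
  "iter_diff f X A (Suc m) = iter_diff f X A m - iter_diff f (X + A (Suc m)) A m"
proof -
  have "(\<Sum>S\<in>Pow {1..m}. (-1) ^ card (insert (Suc m) S) * f (X + sum A (insert (Suc m) S)))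
      = - iter_diff f (X + A (Suc m)) A m"
    unfolding iter_diff_def sum_negf[symmetric]
    by (intro sum.cong refl) (auto simp: finite_subset card_insert_if add_ac)
  then show ?thesis
    by (simp add: iter_diff_def atLeastAtMostSuc_conv sum_Pow_insert)
qed

lemma iter_diff_diff: "iter_diff (\<lambda>Y. f Y - g Y) X A m = iter_diff f X A m - iter_diff g X A m"
  by (simp add: iter_diff_def sum_subtractf right_diff_distrib)

lemma iter_diff_add: "iter_diff (\<lambda>Y. f Y + g Y) X A m = iter_diff f X A m + iter_diff g X A m"
  by (simp add: iter_diff_def sum.distrib distrib_left)

lemma iter_diff_cmult: "iter_diff (\<lambda>Y. c * f Y) X A m = c * iter_diff f X A m"
  by (simp add: iter_diff_def sum_distrib_left mult.left_commute)

lemma iter_diff_shift: "iter_diff (\<lambda>Y. f (Y + a)) X A m = iter_diff f (X + a) A m"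
  by (simp add: iter_diff_def add_ac)

lemma iter_diff_fun_upd_Suc: "iter_diff f X (A(Suc m := a)) m = iter_diff f X A m"
proof -
  have "(\<Sum>i\<in>S. (A(Suc m := a)) i) = (\<Sum>i\<in>S. A i)" if "S \<subseteq> {1..m}" for S
    using that by (intro sum.cong) auto
  then show ?thesis
    unfolding iter_diff_def by simp
qed

lemma iter_diff_const: "iter_diff (\<lambda>Y. c) X A m = (if m = 0 then c else 0)"
  by (induction m arbitrary: X) (simp_all add: iter_diff_Suc)

lemma iter_diff_exp_neg_additive:
  assumes "\<And>Y Z. L (Y + Z) = L Y + L Z"
  shows "iter_diff (\<lambda>Y. exp (- L Y)) X A m = exp (- L X) * (\<Prod>i\<in>{1..m}. 1 - exp (- L (A i)))"
proof (induction m arbitrary: X)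
  case (Suc m)
  have "exp (- L (X + A (Suc m))) = exp (- L X) * exp (- L (A (Suc m)))"
    by (simp add: assms exp_add[symmetric])
  then show ?case
    by (simp add: iter_diff_Suc Suc.IH atLeastAtMostSuc_conv algebra_simps)
qed simp

lemma sum_nonempty_subsets_eq_sum_iter_diff:
  fixes f :: "'a::comm_monoid_add \<Rightarrow> real"
  shows "(\<Sum>S\<in>{S. S \<subseteq> {1..n} \<and> S \<noteq> {}}. (-1) ^ (card S - 1) * f (\<Sum>i\<in>S. A i))
    = (\<Sum>m<n. iter_diff f (A (Suc m)) A m)"
proof (induction n)
  case 0
  then show ?case
    by simp
next
  case (Suc n)
  let ?g = "\<lambda>S. (-1) ^ (card S - 1) * f (\<Sum>i\<in>S. A i)"
  have nonempty: "{S. S \<subseteq> B \<and> S \<noteq> {}} = Pow B - {{}}" for B :: "nat set"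
    by auto
  have "(\<Sum>S\<in>Pow {1..n}. ?g (insert (Suc n) S)) = iter_diff f (A (Suc n)) A n"
    unfolding iter_diff_def by (intro sum.cong refl) (auto simp: finite_subset card_insert_if)
  then show ?case
    using Suc.IH by (simp add: nonempty sum_diff1 atLeastAtMostSuc_conv sum_Pow_insert)
qed

definition completely_monotone_on :: "'a set \<Rightarrow> 'a set \<Rightarrow> ('a::comm_monoid_add \<Rightarrow> real) \<Rightarrow> bool" where
  "completely_monotone_on D C f \<longleftrightarrow>
     (\<forall>X\<in>D. \<forall>A m. (\<forall>i\<in>{1..m}. A i \<in> C) \<longrightarrow> 0 \<le> iter_diff f X A m)"

lemma completely_monotone_onD:
  "completely_monotone_on D C f \<Longrightarrow> X \<in> D \<Longrightarrow> (\<And>i. i \<in> {1..m} \<Longrightarrow> A i \<in> C) \<Longrightarrow>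
    0 \<le> iter_diff f X A m"
  unfolding completely_monotone_on_def by blast

lemma completely_monotone_onI:
  "(\<And>X A m. X \<in> D \<Longrightarrow> (\<And>i. i \<in> {1..m} \<Longrightarrow> A i \<in> C) \<Longrightarrow> 0 \<le> iter_diff f X A m) \<Longrightarrow>
    completely_monotone_on D C f"
  unfolding completely_monotone_on_def by blast

lemma completely_monotone_on_nonneg:
  "completely_monotone_on D C f \<Longrightarrow> X \<in> D \<Longrightarrow> 0 \<le> f X"
  using completely_monotone_onD[of D C f X 0] by simp

lemma completely_monotone_on_subset:
  "completely_monotone_on D C f \<Longrightarrow> D' \<subseteq> D \<Longrightarrow> C' \<subseteq> C \<Longrightarrow> completely_monotone_on D' C' f"
  unfolding completely_monotone_on_def by blast

lemma completely_monotone_on_const: "0 \<le> c \<Longrightarrow> completely_monotone_on D C (\<lambda>Y. c)"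
  unfolding completely_monotone_on_def by (simp add: iter_diff_const)

lemma completely_monotone_on_cmult:
  "0 \<le> c \<Longrightarrow> completely_monotone_on D C f \<Longrightarrow> completely_monotone_on D C (\<lambda>Y. c * f Y)"
  unfolding completely_monotone_on_def by (simp add: iter_diff_cmult)

lemma completely_monotone_on_exp_neg_additive:
  assumes "\<And>Y Z. L (Y + Z) = L Y + L Z" and "\<And>a. a \<in> C \<Longrightarrow> 0 \<le> L a"
  shows "completely_monotone_on D C (\<lambda>Y. exp (- L Y))"
proof -
  have "0 \<le> 1 - exp (- L a)" if "a \<in> C" for a
    using assms(2)[OF that] by simp
  then show ?thesis
    unfolding completely_monotone_on_def iter_diff_exp_neg_additive[OF assms(1)]
    by (auto intro!: mult_nonneg_nonneg prod_nonneg)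
qed

context
  fixes D C :: "'a::comm_monoid_add set"
  assumes cone_shift: "\<And>X a. X \<in> D \<Longrightarrow> a \<in> C \<Longrightarrow> X + a \<in> D"
begin

lemma add_sum_in_cone_domain:
  assumes "X \<in> D" "finite S" "\<And>i. i \<in> S \<Longrightarrow> A i \<in> C"
  shows "X + (\<Sum>i\<in>S. A i) \<in> D"
  using assms(2,3)
proof (induction S rule: finite_induct)
  case (insert x F)
  then show ?case
    using cone_shift[of "X + sum A F" "A x"] by (simp add: add_ac)
qed (simp add: assms(1))

lemma completely_monotone_on_shift:
  "completely_monotone_on D C f \<Longrightarrow> a \<in> C \<Longrightarrow> completely_monotone_on D C (\<lambda>Y. f (Y + a))"
  unfolding completely_monotone_on_def by (simp add: iter_diff_shift cone_shift)

lemma completely_monotone_on_diff_shift: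
  assumes f: "completely_monotone_on D C f" and a: "a \<in> C"
  shows "completely_monotone_on D C (\<lambda>Y. f Y - f (Y + a))"
proof (rule completely_monotone_onI)
  fix X A and m :: nat assume X: "X \<in> D" and A: "\<And>i. i \<in> {1..m} \<Longrightarrow> A i \<in> C"
  have "iter_diff (\<lambda>Y. f Y - f (Y + a)) X A m = iter_diff f X (A(Suc m := a)) (Suc m)"
    by (simp add: iter_diff_diff iter_diff_shift iter_diff_fun_upd_Suc iter_diff_Suc)
  also have "0 \<le> \<dots>"
    using X A a by (intro completely_monotone_onD[OF f]) (auto simp: le_Suc_eq)
  finally show "0 \<le> iter_diff (\<lambda>Y. f Y - f (Y + a)) X A m" .
qed

text \<open>The Leibniz rule
  \<open>fg - (fg)(\<cdot> + a) = f (g - g(\<cdot> + a)) + (f - f(\<cdot> + a)) g(\<cdot> + a)\<close>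
  lets an induction on the order of the difference go through.\<close>
lemma completely_monotone_on_mult:
  assumes "completely_monotone_on D C f" "completely_monotone_on D C g"
  shows "completely_monotone_on D C (\<lambda>Y. f Y * g Y)"
proof -
  have diff_nonneg: "0 \<le> iter_diff (\<lambda>Y. f Y * g Y) X A m"
    if "completely_monotone_on D C f" "completely_monotone_on D C g"
      "X \<in> D" "\<And>i. i \<in> {1..m} \<Longrightarrow> A i \<in> C" for f g X A m
    using that
  proof (induction m arbitrary: f g X)
    case 0
    then show ?case by (simp add: completely_monotone_on_nonneg)
  next
    case (Suc m)
    let ?a = "A (Suc m)"
    have a: "?a \<in> C" and A: "\<And>i. i \<in> {1..m} \<Longrightarrow> A i \<in> C"
      using Suc.prems(4) by auto
    have "iter_diff (\<lambda>Y. f Y * g Y) X A (Suc m)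
        = iter_diff (\<lambda>Y. f Y * (g Y - g (Y + ?a))) X A m
          + iter_diff (\<lambda>Y. (f Y - f (Y + ?a)) * g (Y + ?a)) X A m"
      by (simp add: iter_diff_Suc iter_diff_add[symmetric] iter_diff_shift[symmetric]
          algebra_simps)
    also have "0 \<le> \<dots>"
      using Suc.prems a A
      by (intro add_nonneg_nonneg Suc.IH completely_monotone_on_diff_shift
          completely_monotone_on_shift)
    finally show ?case .
  qed
  show ?thesis
    by (rule completely_monotone_onI) (rule diff_nonneg[OF assms])
qed

lemma completely_monotone_on_cong:
  assumes "completely_monotone_on D C f" "\<And>Y. Y \<in> D \<Longrightarrow> f Y = g Y"
  shows "completely_monotone_on D C g"
proof (rule completely_monotone_onI)
  fix X A and m :: nat assume X: "X \<in> D" and A: "\<And>i. i \<in> {1..m} \<Longrightarrow> A i \<in> C"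
  have "X + (\<Sum>i\<in>S. A i) \<in> D" if "S \<subseteq> {1..m}" for S
    using that A by (intro add_sum_in_cone_domain[OF X]) (auto intro: finite_subset)
  then have "iter_diff g X A m = iter_diff f X A m"
    unfolding iter_diff_def using assms(2) by (intro sum.cong refl) auto
  then show "0 \<le> iter_diff g X A m"
    using completely_monotone_onD[OF assms(1) X A] by simp
qed

lemma completely_monotone_on_integral:
  fixes h :: "'a \<Rightarrow> 'b \<Rightarrow> real"
  assumes "\<And>X. X \<in> D \<Longrightarrow> integrable M (h X)"
    and "\<And>z. z \<in> space M \<Longrightarrow> completely_monotone_on D C (\<lambda>X. h X z)"
  shows "completely_monotone_on D C (\<lambda>X. \<integral>z. h X z \<partial>M)"
proof (rule completely_monotone_onI)
  fix X A and m :: nat assume X: "X \<in> D" and A: "\<And>i. i \<in> {1..m} \<Longrightarrow> A i \<in> C"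
  have "X + (\<Sum>i\<in>S. A i) \<in> D" if "S \<subseteq> {1..m}" for S
    using that A by (intro add_sum_in_cone_domain[OF X]) (auto intro: finite_subset)
  then have "iter_diff (\<lambda>X. \<integral>z. h X z \<partial>M) X A m = (\<integral>z. iter_diff (\<lambda>X. h X z) X A m \<partial>M)"
    unfolding iter_diff_def using assms(1)
    by (subst Bochner_Integration.integral_sum) (auto simp: integrable_mult_right)
  also have "0 \<le> \<dots>"
    using X A by (intro integral_nonneg_AE AE_I2 completely_monotone_onD[OF assms(2)])
  finally show "0 \<le> iter_diff (\<lambda>X. \<integral>z. h X z \<partial>M) X A m" .
qed

end

section \<open>Principal minors and Schur complements\<close>

text \<open>The principal submatrix on an index set \<open>J\<close> is padded with the identity outside
  \<open>J \<times> J\<close>, so that the dimension stays fixed while \<open>J\<close> varies.\<close>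
definition principal_block :: "'n::finite set \<Rightarrow> 'a::zero_neq_one^'n^'n \<Rightarrow> 'a^'n^'n" where
  "principal_block J X = (\<chi> a b. if a \<in> J \<and> b \<in> J then X$a$b else if a = b then 1 else 0)"

definition principal_minor :: "'n::finite set \<Rightarrow> 'a::comm_ring_1^'n^'n \<Rightarrow> 'a" where
  "principal_minor J X = det (principal_block J X)"

definition schur_compl :: "'n::finite \<Rightarrow> 'a::field^'n^'n \<Rightarrow> 'a^'n^'n" where
  "schur_compl j X = (\<chi> a b. X$a$b - X$a$j * X$j$b / X$j$j)"

lemma principal_minor_empty [simp]: "principal_minor {} X = 1"
proof -
  have "principal_block {} X = mat 1"
    by (simp add: principal_block_def mat_def vec_eq_iff)
  then show ?thesis
    by (simp add: principal_minor_def)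
qed

lemma principal_minor_UNIV [simp]: "principal_minor UNIV X = det X"
  by (simp add: principal_minor_def principal_block_def vec_eq_iff)

lemma det_add_row_multiples:
  fixes A :: "'a::comm_ring_1^'n::finite^'n"
  assumes "j \<notin> R"
  shows "det (\<chi> a b. if a \<in> R then A$a$b + c a * A$j$b else A$a$b) = det A"
proof -
  have "finite R" by simp
  then show ?thesis
    using assms
  proof (induction R rule: finite_induct)
    case empty
    then show ?case by (simp add: vec_lambda_eta)
  next
    case (insert r R)
    let ?M = "(\<chi> a b. if a \<in> R then A$a$b + c a * A$j$b else A$a$b) :: 'a^'n^'n"
    have "r \<noteq> j" using insert by auto
    moreover have "(\<chi> a b. if a \<in> insert r R then A$a$b + c a * A$j$b else A$a$b)
        = (\<chi> a. if a = r then row r ?M + c r *s row j ?M else row a ?M)"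
      using insert by (auto simp: vec_eq_iff row_def)
    ultimately show ?case
      using insert by (simp add: det_row_operation)
  qed
qed

lemma det_add_column_multiples:
  fixes A :: "'a::comm_ring_1^'n::finite^'n"
  assumes "j \<notin> R"
  shows "det (\<chi> a b. if b \<in> R then A$a$b + c b * A$a$j else A$a$b) = det A"
proof -
  have "(\<chi> a b. if b \<in> R then A$a$b + c b * A$a$j else A$a$b)
      = transpose (\<chi> a b. if a \<in> R then transpose A$a$b + c a * transpose A$j$b else transpose A$a$b)"
    by (simp add: vec_eq_iff transpose_def)
  then show ?thesis
    using assms by (simp add: det_transpose det_add_row_multiples)
qed

text \<open>Eliminating row and column \<open>j\<close> against the pivot \<open>X$j$j\<close> turns the
  principal block on \<open>insert j I\<close> into the principal block of the Schur complement on \<open>I\<close>,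
  with its \<open>j\<close>-th row scaled by the pivot.\<close>
lemma principal_minor_insert_schur_compl:
  fixes X :: "'a::field^'n::finite^'n"
  assumes "j \<notin> I" "X$j$j \<noteq> 0"
  shows "principal_minor (insert j I) X = X$j$j * principal_minor I (schur_compl j X)"
proof -
  define P where "P = principal_block (insert j I) X"
  define Q where "Q = principal_block I (schur_compl j X)"
  define M where "M = (\<chi> a b. if a \<in> I then P$a$b + (- X$a$j / X$j$j) * P$j$b else P$a$b)"
  define M' where "M' = (\<chi> a b. if b \<in> I then M$a$b + (- X$j$b / X$j$j) * M$a$j else M$a$b)"
  have "det M' = det P"
    using assms(1) by (simp add: M'_def M_def det_add_row_multiples det_add_column_multiples)
  moreover have "M' = (\<chi> a. if a = j then X$j$j *s row a Q else row a Q)"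
    using assms
    by (auto simp: vec_eq_iff M'_def M_def P_def Q_def principal_block_def schur_compl_def row_def
        field_simps)
  ultimately have "det P = X$j$j * det Q"
    using det_row_mul[of j "X$j$j" "\<lambda>a. row a Q" "\<lambda>a. row a Q"] by (simp add: row_def vec_lambda_eta)
  then show ?thesis
    by (simp add: principal_minor_def P_def Q_def)
qed

section \<open>Positive definiteness on an index set\<close>

text \<open>Vectors are plain functions, so that quadratic forms can be integrated over the product
  measure on \<open>J\<close>.\<close>
definition quad_form :: "'n::finite set \<Rightarrow> 'a::comm_semiring_1^'n^'n \<Rightarrow> ('n \<Rightarrow> 'a) \<Rightarrow> 'a" where
  "quad_form J X x = (\<Sum>a\<in>J. \<Sum>b\<in>J. x a * X$a$b * x b)"

definition symmetric_on :: "'n::finite set \<Rightarrow> 'a^'n^'n \<Rightarrow> bool" where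
  "symmetric_on J X \<longleftrightarrow> (\<forall>a\<in>J. \<forall>b\<in>J. X$a$b = X$b$a)"

definition pos_def_on :: "'n::finite set \<Rightarrow> 'a::linordered_field^'n^'n \<Rightarrow> bool" where
  "pos_def_on J X \<longleftrightarrow> symmetric_on J X \<and> (\<forall>x. (\<exists>i\<in>J. x i \<noteq> 0) \<longrightarrow> 0 < quad_form J X x)"

definition pos_semidef_on :: "'n::finite set \<Rightarrow> 'a::linordered_field^'n^'n \<Rightarrow> bool" where
  "pos_semidef_on J X \<longleftrightarrow> symmetric_on J X \<and> (\<forall>x. 0 \<le> quad_form J X x)"

lemma symmetric_onD: "symmetric_on J X \<Longrightarrow> a \<in> J \<Longrightarrow> b \<in> J \<Longrightarrow> X$a$b = X$b$a"
  by (simp add: symmetric_on_def)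

lemma symmetric_on_subset: "symmetric_on J' X \<Longrightarrow> J \<subseteq> J' \<Longrightarrow> symmetric_on J X"
  by (auto simp: symmetric_on_def)

lemma pos_def_onD: "pos_def_on J X \<Longrightarrow> \<exists>i\<in>J. x i \<noteq> 0 \<Longrightarrow> 0 < quad_form J X x"
  by (simp add: pos_def_on_def)

lemma quad_form_add: "quad_form J (X + Y) x = quad_form J X x + quad_form J Y x"
  by (simp add: quad_form_def algebra_simps sum.distrib)

lemma quad_form_eq_0: "(\<And>i. i \<in> J \<Longrightarrow> x i = 0) \<Longrightarrow> quad_form J X x = 0"
  by (simp add: quad_form_def)

lemma quad_form_restrict:
  assumes "J \<subseteq> J'"
  shows "quad_form J' X (\<lambda>i. if i \<in> J then x i else 0) = quad_form J X x"
proof -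
  have "quad_form J' X (\<lambda>i. if i \<in> J then x i else 0)
      = (\<Sum>a\<in>J'. if a \<in> J then \<Sum>b\<in>J'. if b \<in> J then x a * X$a$b * x b else 0 else 0)"
    unfolding quad_form_def by (auto intro!: sum.cong)
  also have "\<dots> = quad_form J X x"
    using assms by (simp add: quad_form_def sum.inter_restrict[symmetric] Int_absorb1)
  finally show ?thesis .
qed

lemma quad_form_insert:
  assumes "j \<notin> I"
  shows "quad_form (insert j I) X x = x j * X$j$j * x j + x j * (\<Sum>b\<in>I. X$j$b * x b)
     + (\<Sum>a\<in>I. x a * X$a$j) * x j + quad_form I X x"
proof -
  have "quad_form (insert j I) X x = (x j * X$j$j * x j + (\<Sum>b\<in>I. x j * X$j$b * x b))
     + (\<Sum>a\<in>I. x a * X$a$j * x j + (\<Sum>b\<in>I. x a * X$a$b * x b))"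
    using assms by (simp add: quad_form_def)
  also have "(\<Sum>a\<in>I. x a * X$a$j * x j + (\<Sum>b\<in>I. x a * X$a$b * x b))
      = (\<Sum>a\<in>I. x a * X$a$j) * x j + quad_form I X x"
    by (simp add: sum.distrib quad_form_def sum_distrib_right)
  also have "(\<Sum>b\<in>I. x j * X$j$b * x b) = x j * (\<Sum>b\<in>I. X$j$b * x b)"
    by (simp add: sum_distrib_left mult.assoc)
  finally show ?thesis
    by (simp add: add.assoc)
qed

lemma pos_def_on_add_pos_semidef_on:
  "pos_def_on J X \<Longrightarrow> pos_semidef_on J Y \<Longrightarrow> pos_def_on J (X + Y)"
  by (simp add: pos_def_on_def pos_semidef_on_def symmetric_on_def quad_form_add add_pos_nonneg)

lemma pos_def_on_imp_pos_semidef_on: "pos_def_on J X \<Longrightarrow> pos_semidef_on J X"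
  unfolding pos_def_on_def pos_semidef_on_def by (metis less_le order_refl quad_form_eq_0)

lemma pos_def_on_subset:
  assumes "pos_def_on J' X" "J \<subseteq> J'"
  shows "pos_def_on J X"
proof -
  have "0 < quad_form J X x" if "\<exists>i\<in>J. x i \<noteq> 0" for x
  proof -
    have "\<exists>i\<in>J'. (if i \<in> J then x i else 0) \<noteq> 0"
      using assms(2) that by auto
    from pos_def_onD[OF assms(1) this] show ?thesis
      by (simp add: quad_form_restrict[OF assms(2)])
  qed
  then show ?thesis
    using assms symmetric_on_subset by (auto simp: pos_def_on_def)
qed

lemma pos_semidef_on_subset:
  assumes "pos_semidef_on J' X" "J \<subseteq> J'"
  shows "pos_semidef_on J X"
  using assms symmetric_on_subset quad_form_restrict[OF assms(2), of X]
  unfolding pos_semidef_on_def by metis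

lemma pos_def_on_diag_pos:
  assumes "pos_def_on J X" "j \<in> J"
  shows "0 < X$j$j"
proof -
  let ?e = "\<lambda>i. if i = j then 1 else 0"
  have "0 < quad_form J X ?e"
    using assms by (auto intro!: pos_def_onD)
  also have "quad_form J X ?e = X$j$j"
    using quad_form_insert[of j "J - {j}" X ?e] insert_Diff[OF assms(2)]
      quad_form_eq_0[of "J - {j}" ?e X] by simp
  finally show ?thesis .
qed

lemma quad_form_insert_schur_compl:
  assumes "j \<notin> I" "symmetric_on (insert j I) X" "X$j$j \<noteq> 0"
  shows "quad_form (insert j I) X (x(j := t))
    = X$j$j * (t + (\<Sum>b\<in>I. X$j$b * x b) / X$j$j)\<^sup>2 + quad_form I (schur_compl j X) x"
proof -
  let ?L = "\<Sum>b\<in>I. X$j$b * x b"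
  have col: "(\<Sum>a\<in>I. x a * X$a$j) = ?L"
  proof (rule sum.cong[OF refl])
    fix a assume "a \<in> I"
    then show "x a * X$a$j = X$j$a * x a"
      using symmetric_onD[OF assms(2), of a j] by simp
  qed
  have "quad_form I (schur_compl j X) x
      = (\<Sum>a\<in>I. \<Sum>b\<in>I. x a * X$a$b * x b - (x a * X$a$j) * (X$j$b * x b) / X$j$j)"
    unfolding quad_form_def schur_compl_def
    by (intro sum.cong refl) (simp add: algebra_simps diff_divide_distrib)
  also have "\<dots> = quad_form I X x - (\<Sum>a\<in>I. x a * X$a$j) * ?L / X$j$j"
    by (simp add: quad_form_def sum_subtractf sum_divide_distrib sum_product)
  finally have schur: "quad_form I (schur_compl j X) x = quad_form I X x - ?L * ?L / X$j$j"
    by (simp only: col)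
  have "quad_form I X (x(j := t)) = quad_form I X x" "(\<Sum>b\<in>I. X$j$b * (x(j := t)) b) = ?L"
      "(\<Sum>a\<in>I. (x(j := t)) a * X$a$j) = (\<Sum>a\<in>I. x a * X$a$j)"
    using assms(1) unfolding quad_form_def by (auto intro!: sum.cong)
  then have "quad_form (insert j I) X (x(j := t)) = t * X$j$j * t + t * ?L + ?L * t + quad_form I X x"
    using quad_form_insert[OF assms(1), of X "x(j := t)"] col by simp
  also have "\<dots> = X$j$j * (t + ?L / X$j$j)\<^sup>2 + (quad_form I X x - ?L * ?L / X$j$j)"
    using assms(3) by (simp add: power2_eq_square field_simps)
  finally show ?thesis
    by (simp only: schur)
qed

lemma pos_def_on_schur_compl:
  assumes "j \<notin> I" and pd: "pos_def_on (insert j I) X"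
  shows "pos_def_on I (schur_compl j X)"
proof -
  have d: "X$j$j \<noteq> 0"
    using pos_def_on_diag_pos[OF pd] by force
  have sym: "symmetric_on (insert j I) X"
    using pd by (simp add: pos_def_on_def)
  have "schur_compl j X $ a $ b = schur_compl j X $ b $ a" if "a \<in> I" "b \<in> I" for a b
    using that symmetric_onD[OF sym, of a b] symmetric_onD[OF sym, of a j]
      symmetric_onD[OF sym, of j b] by (simp add: schur_compl_def)
  then have "symmetric_on I (schur_compl j X)"
    by (simp add: symmetric_on_def)
  moreover have "0 < quad_form I (schur_compl j X) x" if "\<exists>i\<in>I. x i \<noteq> 0" for x
  proof -
    let ?t = "- (\<Sum>b\<in>I. X$j$b * x b) / X$j$j"
    have "0 < quad_form (insert j I) X (x(j := ?t))"
      using that assms(1) by (intro pos_def_onD[OF pd]) auto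
    then show ?thesis
      using quad_form_insert_schur_compl[OF assms(1) sym d, of x ?t] by simp
  qed
  ultimately show ?thesis
    by (simp add: pos_def_on_def)
qed

lemma principal_minor_pos:
  fixes X :: "'a::linordered_field^'n::finite^'n"
  shows "pos_def_on J X \<Longrightarrow> 0 < principal_minor J X"
proof (induction J arbitrary: X rule: infinite_finite_induct)
  case (insert j I)
  have "0 < X$j$j"
    using pos_def_on_diag_pos[OF insert.prems] by simp
  moreover have "0 < principal_minor I (schur_compl j X)"
    using insert pos_def_on_schur_compl by blast
  ultimately show ?case
    using insert.hyps by (simp add: principal_minor_insert_schur_compl)
qed simp_all

lemma sym_pos_def_mat_imp_pos_def_on_UNIV: "sym_pos_def_mat A \<Longrightarrow> pos_def_on UNIV A"
proof -
  assume A: "sym_pos_def_mat A"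
  have "symmetric_on UNIV A"
    using A unfolding sym_pos_def_mat_def symmetric_on_def by (metis transpose_def vec_lambda_beta)
  moreover have "0 < quad_form UNIV A x" if "\<exists>i. x i \<noteq> 0" for x
  proof -
    have "(\<chi> i. x i) \<noteq> 0"
      using that by (auto simp: vec_eq_iff)
    then have "0 < (\<chi> i. x i) \<bullet> (A *v (\<chi> i. x i))"
      using A by (simp add: sym_pos_def_mat_def)
    also have "\<dots> = quad_form UNIV A x"
      by (simp add: inner_vec_def matrix_vector_mult_def quad_form_def sum_distrib_left mult.assoc)
    finally show ?thesis .
  qed
  ultimately show ?thesis
    by (simp add: pos_def_on_def)
qed

section \<open>Gaussian integrals\<close>

lemma nn_integral_exp_neg_square: "(\<integral>\<^sup>+x. ennreal (exp (- x\<^sup>2)) \<partial>lborel) = ennreal (sqrt pi)"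
proof -
  have "has_bochner_integral lborel (\<lambda>x::real. exp (- x\<^sup>2)) (sqrt pi)"
    using has_bochner_integral_even_function[OF gaussian_moment_even_pos[where k=0]] by simp
  then show ?thesis
    by (simp add: has_bochner_integral_iff nn_integral_eq_integral)
qed

lemma nn_integral_gaussian_affine:
  assumes "0 < d"
  shows "(\<integral>\<^sup>+t. ennreal (exp (- (d * (t + c)\<^sup>2))) \<partial>lborel) = ennreal (sqrt pi / sqrt d)"
proof -
  have "(\<integral>\<^sup>+t. ennreal (exp (- (d * (t + c)\<^sup>2))) \<partial>lborel)
      = ennreal (1 / sqrt d) * (\<integral>\<^sup>+x. ennreal (exp (- (d * ((- c + (1 / sqrt d) * x) + c)\<^sup>2))) \<partial>lborel)"
    using assms by (subst nn_integral_real_affine[where c = "1 / sqrt d" and t = "- c"]) auto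
  also have "(\<lambda>x. d * ((- c + (1 / sqrt d) * x) + c)\<^sup>2) = (\<lambda>x. x\<^sup>2)"
    using assms by (simp add: power_divide)
  finally show ?thesis
    using assms by (simp add: nn_integral_exp_neg_square ennreal_mult[symmetric])
qed

text \<open>This is \<open>\<Gamma> ((g + 1) / 2)\<close>; only \<open>0 < gaussian_abs_moment g < \<infinity>\<close> is needed.\<close>
definition gaussian_abs_moment :: "real \<Rightarrow> ennreal" where
  "gaussian_abs_moment g = (\<integral>\<^sup>+s. ennreal (\<bar>s\<bar> powr g * exp (- s\<^sup>2)) \<partial>lborel)"

lemma nn_integral_abs_powr_gaussian:
  assumes "0 < a"
  shows "(\<integral>\<^sup>+t. ennreal (\<bar>t\<bar> powr g * exp (- (a * t\<^sup>2))) \<partial>lborel)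
    = ennreal (a powr (- (g + 1) / 2)) * gaussian_abs_moment g"
proof -
  have sqrt_powr: "sqrt a powr e = a powr (e / 2)" for e
    using assms by (subst powr_half_sqrt[symmetric]) (simp_all add: powr_powr)
  have "(\<integral>\<^sup>+t. ennreal (\<bar>t\<bar> powr g * exp (- (a * t\<^sup>2))) \<partial>lborel)
      = ennreal \<bar>1 / sqrt a\<bar> * (\<integral>\<^sup>+x. ennreal (\<bar>0 + (1 / sqrt a) * x\<bar> powr g * exp (- (a * (0 + (1 / sqrt a) * x)\<^sup>2))) \<partial>lborel)"
    by (rule nn_integral_real_affine) (use assms in auto)
  also have "(\<lambda>x. ennreal (\<bar>0 + (1 / sqrt a) * x\<bar> powr g * exp (- (a * (0 + (1 / sqrt a) * x)\<^sup>2))))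
      = (\<lambda>x. ennreal (a powr (- g / 2)) * ennreal (\<bar>x\<bar> powr g * exp (- x\<^sup>2)))"
  proof
    fix x
    have "a * (0 + (1 / sqrt a) * x)\<^sup>2 = x\<^sup>2"
      using assms by (simp add: power_divide power_mult_distrib)
    moreover have "\<bar>0 + (1 / sqrt a) * x\<bar> powr g = a powr (- g / 2) * \<bar>x\<bar> powr g"
      using assms by (simp add: abs_mult powr_mult powr_divide sqrt_powr powr_minus_divide)
    ultimately show "ennreal (\<bar>0 + (1 / sqrt a) * x\<bar> powr g * exp (- (a * (0 + (1 / sqrt a) * x)\<^sup>2)))
        = ennreal (a powr (- g / 2)) * ennreal (\<bar>x\<bar> powr g * exp (- x\<^sup>2))"
      by (simp add: ennreal_mult[symmetric] mult.assoc)
  qed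
  also have "(\<integral>\<^sup>+x. ennreal (a powr (- g / 2)) * ennreal (\<bar>x\<bar> powr g * exp (- x\<^sup>2)) \<partial>lborel)
      = ennreal (a powr (- g / 2)) * gaussian_abs_moment g"
    unfolding gaussian_abs_moment_def by (rule nn_integral_cmult) simp
  moreover have "\<bar>1 / sqrt a\<bar> = a powr (- 1 / 2)"
    using assms by (subst powr_half_sqrt[symmetric]) (simp_all add: powr_minus_divide)
  moreover have "a powr (- 1 / 2) * a powr (- g / 2) = a powr (- (g + 1) / 2)"
    by (simp add: powr_add[symmetric] field_simps)
  ultimately show ?thesis
    by (simp add: mult.assoc[symmetric] ennreal_mult[symmetric])
qed

lemma gaussian_abs_moment_finite:
  assumes "-1 < g"
  shows "gaussian_abs_moment g < \<infinity>"
proof -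
  define k where "k = nat \<lceil>g\<rceil>"
  let ?near = "\<lambda>s::real. ennreal (indicator {0..1} s * s powr g)"
  let ?far = "\<lambda>s::real. ennreal (exp (- s\<^sup>2) * s ^ (2 * k))"
  have bound: "ennreal (\<bar>s\<bar> powr g * exp (- s\<^sup>2)) \<le> ?near s + ?near (-s) + ?far s" for s
  proof (cases "\<bar>s\<bar> \<le> 1")
    case True
    have "\<bar>s\<bar> powr g * exp (- s\<^sup>2) \<le> \<bar>s\<bar> powr g"
      by (rule mult_left_le) auto
    also have "\<dots> = indicator {0..1} s * s powr g + indicator {0..1} (-s) * (-s) powr g"
      using True by (cases "s = 0") (auto simp: indicator_def)
    finally have "ennreal (\<bar>s\<bar> powr g * exp (- s\<^sup>2)) \<le> ?near s + ?near (-s)"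
      by (simp add: ennreal_plus[symmetric] del: ennreal_plus)
    then show ?thesis
      by (simp add: add_increasing2)
  next
    case False
    have "\<bar>s\<bar> powr g \<le> \<bar>s\<bar> powr real (2 * k)"
      using False by (intro powr_mono) (auto simp: k_def, linarith)
    also have "\<dots> = \<bar>s\<bar> ^ (2 * k)"
      using False by (intro powr_realpow) auto
    also have "\<dots> = s ^ (2 * k)"
      by (simp add: power_even_abs)
    finally have "ennreal (\<bar>s\<bar> powr g * exp (- s\<^sup>2)) \<le> ?far s"
      by (intro ennreal_leI) (simp add: mult.commute)
    then show ?thesis
      by (simp add: add_increasing)
  qed
  have near: "(\<integral>\<^sup>+s. ?near s \<partial>lborel) = ennreal (1 / (g + 1))"
  proof -
    have "((\<lambda>x. x powr g) has_integral (1 powr (g + 1) / (g + 1))) {0..1::real}"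
      using assms by (intro has_integral_powr_from_0) auto
    then show ?thesis
      by (subst nn_integral_has_integral_lebesgue) auto
  qed
  have "integrable lborel (\<lambda>s::real. exp (- s\<^sup>2) * s ^ (2 * k))"
    using has_bochner_integral_even_function[OF gaussian_moment_even_pos[where k=k]]
    by (auto simp: has_bochner_integral_iff)
  then have far: "(\<integral>\<^sup>+s. ?far s \<partial>lborel) < \<infinity>"
    by (subst nn_integral_eq_integral) (auto simp: zero_le_mult_iff zero_le_even_power)
  have "gaussian_abs_moment g \<le> (\<integral>\<^sup>+s. ?near s + ?near (-s) + ?far s \<partial>lborel)"
    unfolding gaussian_abs_moment_def by (intro nn_integral_mono bound)
  also have "\<dots> = (\<integral>\<^sup>+s. ?near s \<partial>lborel) + (\<integral>\<^sup>+s. ?near (-s) \<partial>lborel) + (\<integral>\<^sup>+s. ?far s \<partial>lborel)"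
    by (simp add: nn_integral_add)
  also have "(\<integral>\<^sup>+s. ?near (-s) \<partial>lborel) = (\<integral>\<^sup>+s. ?near s \<partial>lborel)"
    using nn_integral_real_affine[of ?near "-1" 0] by simp
  also have "\<dots> + \<dots> + (\<integral>\<^sup>+s. ?far s \<partial>lborel) < \<infinity>"
    using near far by simp
  finally show ?thesis .
qed

lemma gaussian_abs_moment_pos: "0 < gaussian_abs_moment g"
proof (rule ccontr)
  assume "\<not> 0 < gaussian_abs_moment g"
  then have "AE s in lborel. ennreal (\<bar>s\<bar> powr g * exp (- s\<^sup>2)) = 0"
    by (simp add: gaussian_abs_moment_def nn_integral_0_iff_AE)
  then have "AE s in lborel. (s::real) = 0"
    by eventually_elim simp
  then have "AE s in lborel. (s::real) = 0 \<and> s \<noteq> 0"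
    using AE_lborel_singleton by (rule eventually_conj)
  then have "ae_filter (lborel :: real measure) = bot"
    by (simp add: trivial_limit_def)
  then show False
    by (simp add: ae_filter_eq_bot_iff)
qed

lemma product_sigma_finite_lborel: "product_sigma_finite (\<lambda>_. lborel :: real measure)"
  by (simp add: product_sigma_finite_def lborel.sigma_finite_measure_axioms)

lemma borel_measurable_abs_powr_gaussian:
  fixes X :: "real^'n::finite^'n"
  assumes "k \<in> J"
  shows "(\<lambda>z. \<bar>z k\<bar> powr g * exp (- quad_form J X z)) \<in> borel_measurable (PiM J (\<lambda>_. lborel))"
proof -
  have component: "(\<lambda>z. z a) \<in> borel_measurable (PiM J (\<lambda>_. lborel :: real measure))" if "a \<in> J" for a
    using measurable_component_singleton[OF that, of "\<lambda>_. lborel"] by simp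
  have "(\<lambda>z. quad_form J X z) \<in> borel_measurable (PiM J (\<lambda>_. lborel))"
    unfolding quad_form_def by (intro borel_measurable_sum borel_measurable_times component) auto
  moreover have "(\<lambda>z. z k) \<in> borel_measurable (PiM J (\<lambda>_. lborel :: real measure))"
    using assms by (rule component)
  ultimately show ?thesis
    by measurable
qed

lemma powr_pivot:
  fixes d p q :: real
  assumes "0 < d" "0 < p" "0 < q"
  shows "(d * p) powr (g / 2) * (d * q) powr (- (g + 1) / 2)
    = p powr (g / 2) * q powr (- (g + 1) / 2) / sqrt d"
proof -
  have "d powr (g / 2) * d powr (- (g + 1) / 2) = d powr (- 1 / 2)"
    by (simp add: powr_add[symmetric] field_simps)
  also have "\<dots> = 1 / sqrt d"
    using assms(1) by (subst powr_half_sqrt[symmetric]) (simp_all add: powr_minus_divide)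
  finally have "d powr (g / 2) * d powr (- (g + 1) / 2) = 1 / sqrt d" .
  moreover have "(d * p) powr (g / 2) * (d * q) powr (- (g + 1) / 2)
      = (d powr (g / 2) * d powr (- (g + 1) / 2)) * (p powr (g / 2) * q powr (- (g + 1) / 2))"
    using assms by (simp add: powr_mult mult_ac)
  ultimately show ?thesis
    by simp
qed

definition gaussian_abs_moment_on :: "'n::finite set \<Rightarrow> 'n \<Rightarrow> real \<Rightarrow> real^'n^'n \<Rightarrow> ennreal" where
  "gaussian_abs_moment_on J k g X =
     (\<integral>\<^sup>+z. ennreal (\<bar>z k\<bar> powr g * exp (- quad_form J X z)) \<partial>(PiM J (\<lambda>_. lborel)))"

lemma gaussian_abs_moment_on_singleton:
  assumes "0 < X$k$k"
  shows "gaussian_abs_moment_on {k} k g X = ennreal (X$k$k powr (- (g + 1) / 2)) * gaussian_abs_moment g"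
proof -
  have "gaussian_abs_moment_on {k} k g X
      = (\<integral>\<^sup>+z. ennreal (\<bar>z k\<bar> powr g * exp (- (X$k$k * (z k)\<^sup>2))) \<partial>(PiM {k} (\<lambda>_. lborel)))"
    by (simp add: gaussian_abs_moment_on_def quad_form_def power2_eq_square mult_ac)
  also have "\<dots> = (\<integral>\<^sup>+t. ennreal (\<bar>t\<bar> powr g * exp (- (X$k$k * t\<^sup>2))) \<partial>lborel)"
    by (rule product_sigma_finite.product_nn_integral_singleton[OF product_sigma_finite_lborel]) simp
  finally show ?thesis
    using nn_integral_abs_powr_gaussian[OF assms] by simp
qed

text \<open>Integrating out the coordinate \<open>j\<close> by completing the square.\<close>
lemma gaussian_abs_moment_on_insert:
  assumes "j \<notin> I" "k \<in> I" "pos_def_on (insert j I) X"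
  shows "gaussian_abs_moment_on (insert j I) k g X
    = gaussian_abs_moment_on I k g (schur_compl j X) * ennreal (sqrt pi / sqrt (X$j$j))"
proof -
  have d: "0 < X$j$j"
    using pos_def_on_diag_pos[OF assms(3)] by simp
  have sym: "symmetric_on (insert j I) X"
    using assms(3) by (simp add: pos_def_on_def)
  let ?h = "\<lambda>z. ennreal (\<bar>z k\<bar> powr g * exp (- quad_form I (schur_compl j X) z))"
  have "gaussian_abs_moment_on (insert j I) k g X
      = (\<integral>\<^sup>+z. (\<integral>\<^sup>+t. ennreal (\<bar>(z(j := t)) k\<bar> powr g * exp (- quad_form (insert j I) X (z(j := t))))
          \<partial>lborel) \<partial>(PiM I (\<lambda>_. lborel)))"
    unfolding gaussian_abs_moment_on_def using assms(1,2)
    by (intro product_sigma_finite.product_nn_integral_insert[OF product_sigma_finite_lborel])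
      (auto intro: borel_measurable_abs_powr_gaussian)
  also have "\<dots> = (\<integral>\<^sup>+z. ?h z * ennreal (sqrt pi / sqrt (X$j$j)) \<partial>(PiM I (\<lambda>_. lborel)))"
  proof (rule nn_integral_cong)
    fix z :: "'a \<Rightarrow> real"
    let ?c = "(\<Sum>b\<in>I. X$j$b * z b) / X$j$j"
    have "ennreal (\<bar>(z(j := t)) k\<bar> powr g * exp (- quad_form (insert j I) X (z(j := t))))
        = ?h z * ennreal (exp (- (X$j$j * (t + ?c)\<^sup>2)))" for t
      using assms(1,2) d quad_form_insert_schur_compl[OF assms(1) sym, of z t]
      by (auto simp: ennreal_mult[symmetric] exp_add[symmetric] mult.assoc)
    then show "(\<integral>\<^sup>+t. ennreal (\<bar>(z(j := t)) k\<bar> powr g * exp (- quad_form (insert j I) X (z(j := t))))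
        \<partial>lborel) = ?h z * ennreal (sqrt pi / sqrt (X$j$j))"
      by (simp add: nn_integral_cmult nn_integral_gaussian_affine[OF d])
  qed
  also have "\<dots> = gaussian_abs_moment_on I k g (schur_compl j X) * ennreal (sqrt pi / sqrt (X$j$j))"
    unfolding gaussian_abs_moment_on_def using assms(2)
    by (intro nn_integral_multc) (auto intro: borel_measurable_abs_powr_gaussian)
  finally show ?thesis .
qed

lemma gaussian_abs_moment_on_eq:
  "finite I \<Longrightarrow> k \<notin> I \<Longrightarrow> pos_def_on (insert k I) X \<Longrightarrow>
    gaussian_abs_moment_on (insert k I) k g X
      = ennreal (sqrt pi ^ card I * principal_minor I X powr (g / 2)
                 * principal_minor (insert k I) X powr (- (g + 1) / 2)) * gaussian_abs_moment g"
proof (induction I arbitrary: X rule: finite_induct)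
  case empty
  have "0 < X$k$k"
    using pos_def_on_diag_pos[OF empty.prems(2)] by simp
  moreover have "principal_minor {k} X = X$k$k"
    using principal_minor_insert_schur_compl[of k "{}" X] calculation by simp
  ultimately show ?case
    by (simp add: gaussian_abs_moment_on_singleton)
next
  case (insert j I)
  define S where "S = schur_compl j X"
  have kj: "k \<noteq> j" "k \<notin> I"
    using insert.prems by auto
  have jk: "j \<notin> insert k I"
    using insert.hyps kj by auto
  have pd: "pos_def_on (insert j (insert k I)) X"
    using insert.prems(2) by (simp add: insert_commute)
  have d: "0 < X$j$j"
    using pos_def_on_diag_pos[OF pd] by simp
  have pdS: "pos_def_on (insert k I) S"
    unfolding S_def using pos_def_on_schur_compl[OF jk pd] .
  have p: "0 < principal_minor I S" and q: "0 < principal_minor (insert k I) S"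
    using principal_minor_pos pos_def_on_subset[OF pdS] by auto
  have minors: "principal_minor (insert j I) X = X$j$j * principal_minor I S"
      "principal_minor (insert k (insert j I)) X = X$j$j * principal_minor (insert k I) S"
    using principal_minor_insert_schur_compl[of j I X] principal_minor_insert_schur_compl[OF jk, of X]
      insert.hyps d by (simp_all add: S_def insert_commute)
  have "sqrt pi ^ card (insert j I) * principal_minor (insert j I) X powr (g / 2)
      * principal_minor (insert k (insert j I)) X powr (- (g + 1) / 2)
      = sqrt pi ^ card I * sqrt pi
        * ((X$j$j * principal_minor I S) powr (g / 2)
           * (X$j$j * principal_minor (insert k I) S) powr (- (g + 1) / 2))"
    using insert.hyps by (simp add: minors mult_ac)
  also have "\<dots> = sqrt pi ^ card I * principal_minor I S powr (g / 2)
        * principal_minor (insert k I) S powr (- (g + 1) / 2) * (sqrt pi / sqrt (X$j$j))"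
    unfolding powr_pivot[OF d p q] by simp
  moreover have "gaussian_abs_moment_on (insert k (insert j I)) k g X
      = gaussian_abs_moment_on (insert k I) k g S * ennreal (sqrt pi / sqrt (X$j$j))"
    using gaussian_abs_moment_on_insert[OF jk _ pd] by (simp add: S_def insert_commute)
  ultimately show ?case
    using insert.IH[OF kj(2) pdS] d
    by (simp add: ennreal_mult[symmetric] mult_ac)
qed

lemma completely_monotone_gaussian_abs_moment_on:
  assumes "k \<in> J" "-1 < g"
  shows "completely_monotone_on {X. pos_def_on J X} {X. pos_semidef_on J X}
    (\<lambda>X. enn2real (gaussian_abs_moment_on J k g X))"
proof -
  define h where "h X z = \<bar>z k\<bar> powr g * exp (- quad_form J X z)" for X :: "real^'a^'a" and z
  let ?M = "PiM J (\<lambda>_. lborel :: real measure)"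
  have meas: "h X \<in> borel_measurable ?M" for X
    unfolding h_def using borel_measurable_abs_powr_gaussian[OF assms(1)] .
  have "(\<lambda>X. enn2real (gaussian_abs_moment_on J k g X)) = (\<lambda>X. \<integral>z. h X z \<partial>?M)"
    unfolding gaussian_abs_moment_on_def h_def
    by (intro ext integral_eq_nn_integral[symmetric] meas[unfolded h_def]) simp
  moreover have "integrable ?M (h X)" if "pos_def_on J X" for X
  proof (rule integrableI_bounded[OF meas])
    have "gaussian_abs_moment_on (insert k (J - {k})) k g X < \<infinity>"
      using that assms gaussian_abs_moment_finite
      by (subst gaussian_abs_moment_on_eq) (auto simp: insert_absorb ennreal_mult_less_top)
    then show "(\<integral>\<^sup>+z. ennreal (norm (h X z)) \<partial>?M) < \<infinity>"
      using assms(1) by (simp add: gaussian_abs_moment_on_def h_def insert_absorb)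
  qed
  moreover have "completely_monotone_on {X. pos_def_on J X} {X. pos_semidef_on J X} (\<lambda>X. h X z)" for z
    unfolding h_def
    by (intro completely_monotone_on_cmult completely_monotone_on_exp_neg_additive)
      (auto simp: quad_form_add pos_semidef_on_def)
  ultimately show ?thesis
    using completely_monotone_on_integral[of "{X. pos_def_on J X}" "{X. pos_semidef_on J X}" ?M h]
    by (simp add: pos_def_on_add_pos_semidef_on)
qed

section \<open>Complete monotonicity of negative powers of principal minors\<close>

definition gindikin_set :: "nat \<Rightarrow> real set" where
  "gindikin_set N = range (\<lambda>k::nat. real k / 2) \<union> {(real N - 1) / 2..}"

lemma gindikin_set_Suc_nonneg: "r \<in> gindikin_set (Suc N) \<Longrightarrow> 0 \<le> r"
  by (auto simp: gindikin_set_def)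

lemma gindikin_set_Suc_shift:
  assumes "r \<in> gindikin_set (Suc N)" "0 < r"
  shows "r - 1 / 2 \<in> gindikin_set N"
  using assms(1) unfolding gindikin_set_def
proof (elim UnE)
  assume "r \<in> range (\<lambda>k::nat. real k / 2)"
  then obtain k :: nat where k: "r = real k / 2"
    by auto
  with assms(2) have "r - 1 / 2 = real (k - 1) / 2"
    by (cases k) (auto simp: field_simps)
  then show "r - 1 / 2 \<in> range (\<lambda>k::nat. real k / 2) \<union> {(real N - 1) / 2..}"
    by simp
next
  assume "r \<in> {(real (Suc N) - 1) / 2..}"
  then show "r - 1 / 2 \<in> range (\<lambda>k::nat. real k / 2) \<union> {(real N - 1) / 2..}"
    by (simp add: field_simps)
qed

lemma principal_minor_insert_powr_eq:
  fixes X :: "real^'n::finite^'n"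
  assumes "k \<notin> J" "pos_def_on (insert k J) X" "0 < r"
  shows "principal_minor (insert k J) X powr (- r)
    = principal_minor J X powr (- (r - 1 / 2))
      * enn2real (gaussian_abs_moment_on (insert k J) k (2 * r - 1) X)
      / (sqrt pi ^ card J * enn2real (gaussian_abs_moment (2 * r - 1)))"
proof -
  let ?K = "enn2real (gaussian_abs_moment (2 * r - 1))"
  have K: "0 < ?K"
    using assms(3) gaussian_abs_moment_pos gaussian_abs_moment_finite[of "2 * r - 1"]
    by (simp add: enn2real_positive_iff less_top)
  have "0 < principal_minor J X"
    using assms(2) by (auto intro: principal_minor_pos pos_def_on_subset)
  then have "principal_minor J X powr (- (r - 1 / 2)) * principal_minor J X powr (r - 1 / 2) = 1"
    by (simp add: powr_add[symmetric])
  moreover have "enn2real (gaussian_abs_moment_on (insert k J) k (2 * r - 1) X)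
      = sqrt pi ^ card J * principal_minor J X powr (r - 1 / 2)
        * principal_minor (insert k J) X powr (- r) * ?K"
    using assms by (simp add: gaussian_abs_moment_on_eq enn2real_mult field_simps)
  ultimately show ?thesis
    using K by (simp add: field_simps)
qed

theorem completely_monotone_principal_minor_powr:
  fixes J :: "'n::finite set"
  assumes "r \<in> gindikin_set (card J)"
  shows "completely_monotone_on {X. pos_def_on J X} {X. pos_semidef_on J X}
    (\<lambda>X. principal_minor J X powr (- r))"
  using finite[of J] assms
proof (induction J arbitrary: r rule: finite_induct)
  case empty
  show ?case
    by (simp add: completely_monotone_on_const)
next
  case (insert k J)
  let ?D = "{X. pos_def_on (insert k J) X}" and ?C = "{X. pos_semidef_on (insert k J) X}"
  have cone: "X + A \<in> ?D" if "X \<in> ?D" "A \<in> ?C" for X A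
    using that by (simp add: pos_def_on_add_pos_semidef_on)
  have r: "r \<in> gindikin_set (Suc (card J))"
    using insert by simp
  show ?case
  proof (cases "r = 0")
    case True
    then show ?thesis
      by (intro completely_monotone_on_cong[OF cone completely_monotone_on_const[of 1]])
        (auto dest: principal_minor_pos)
  next
    case False
    with gindikin_set_Suc_nonneg[OF r] have "0 < r"
      by simp
    define C where "C = sqrt pi ^ card J * enn2real (gaussian_abs_moment (2 * r - 1))"
    have "completely_monotone_on {X. pos_def_on J X} {X. pos_semidef_on J X}
        (\<lambda>X. principal_minor J X powr (- (r - 1 / 2)))"
      using insert.IH gindikin_set_Suc_shift[OF r \<open>0 < r\<close>] .
    then have "completely_monotone_on ?D ?C (\<lambda>X. principal_minor J X powr (- (r - 1 / 2)))"
      by (rule completely_monotone_on_subset) (auto intro: pos_def_on_subset pos_semidef_on_subset)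
    moreover have "completely_monotone_on ?D ?C
        (\<lambda>X. enn2real (gaussian_abs_moment_on (insert k J) k (2 * r - 1) X))"
      using \<open>0 < r\<close> by (intro completely_monotone_gaussian_abs_moment_on) auto
    ultimately have product: "completely_monotone_on ?D ?C
        (\<lambda>X. 1 / C * (principal_minor J X powr (- (r - 1 / 2))
          * enn2real (gaussian_abs_moment_on (insert k J) k (2 * r - 1) X)))"
      by (intro completely_monotone_on_cmult completely_monotone_on_mult[OF cone])
        (auto simp: C_def)
    show ?thesis
    proof (rule completely_monotone_on_cong[OF cone product])
      fix Y :: "real^'n^'n" assume "Y \<in> ?D"
      then show "1 / C * (principal_minor J Y powr (- (r - 1 / 2))
          * enn2real (gaussian_abs_moment_on (insert k J) k (2 * r - 1) Y))
          = principal_minor (insert k J) Y powr (- r)"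
        using principal_minor_insert_powr_eq[OF insert.hyps(2) _ \<open>0 < r\<close>] by (simp add: C_def)
    qed
  qed
qed

theorem corollary4p6:
  fixes \<rho> :: real and n :: nat and A :: "nat \<Rightarrow> real^'n^'n"
  assumes "\<rho> \<in> {real k / 2 | k. k \<in> (UNIV :: nat set)} \<union> {(real CARD('n) - 1) / 2..}"
    and "n \<ge> 1"
    and "\<forall>i\<in>{1..n}. sym_pos_def_mat (A i)"
  shows "(\<Sum>S\<in>{S. S \<subseteq> {1..n} \<and> S \<noteq> {}}.
            (-1) ^ (card S - 1) * det (\<Sum>i\<in>S. A i) powr (-\<rho>)) \<ge> 0"
proof -
  have "\<rho> \<in> gindikin_set (card (UNIV :: 'n set))"
    using assms(1) by (auto simp: gindikin_set_def)
  then have cm: "completely_monotone_on {X. pos_def_on UNIV X} {X. pos_semidef_on UNIV X}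
      (\<lambda>X :: real^'n^'n. det X powr (- \<rho>))"
    using completely_monotone_principal_minor_powr by fastforce
  have pd: "pos_def_on UNIV (A i)" if "i \<in> {1..n}" for i
    using assms(3) that by (simp add: sym_pos_def_mat_imp_pos_def_on_UNIV)
  have "0 \<le> (\<Sum>m<n. iter_diff (\<lambda>X. det X powr (- \<rho>)) (A (Suc m)) A m)"
    using pd by (intro sum_nonneg completely_monotone_onD[OF cm]) (auto intro: pos_def_on_imp_pos_semidef_on)
  also have "\<dots> = (\<Sum>S\<in>{S. S \<subseteq> {1..n} \<and> S \<noteq> {}}. (-1) ^ (card S - 1) * det (\<Sum>i\<in>S. A i) powr (-\<rho>))"
    by (rule sum_nonempty_subsets_eq_sum_iter_diff[symmetric])
  finally show ?thesis .
qed

end
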